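(* Let $(p_n)$ be a sequence with $0<\liminf_{n\to\infty} p_n\leq \limsup_{n\to\infty} p_n<1$, let $p=p_n$, $q=q_n=1-p_n$ and $V=npq$, and fix $M>0$. For $\varphi>0$ put $R=|pe^{i\varphi}+q|^n$ and \[ R_2=-\tfrac{1}{2}V,\quad R_4=\tfrac{1}{4}V\big(\tfrac{1}{6}-pq\big),\quad R_6=-\tfrac{1}{6}V\big(\tfrac{1}{120}-\tfrac{1}{4}pq+p^2q^2\big). \] Then, as $n\to\infty$, uniformly for $0<\varphi\leq M/V^{1/4}$, \[ R= e^{R_2\varphi^2}\Big(1+R_4\varphi^4+R_6\varphi^6+\frac{1}{2}R_4^2\varphi^8+\sum_{k=1}^3 O(n^k\varphi^{2k+6})\Big), \] i.e. there are $C>0$ and $N$ such that for all $n\geq N$ and all $0<\varphi\leq M/V^{1/4}$ the quantity $e^{-R_2\varphi^2}R-\big(1+R_4\varphi^4+R_6\varphi^6+\frac{1}{2}R_4^2\varphi^8\big)$ has absolute value at most $C\sum_{k=1}^3 n^k\varphi^{2k+6}$. *)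

theory Defs
  imports "HOL-Analysis.Analysis"
begin

definition binV :: "(nat \<Rightarrow> real) \<Rightarrow> nat \<Rightarrow> real" where
  "binV p n = real n * p n * (1 - p n)"

definition binR :: "(nat \<Rightarrow> real) \<Rightarrow> nat \<Rightarrow> real \<Rightarrow> real" where
  "binR p n \<phi> = cmod (complex_of_real (p n) * exp (\<i> * complex_of_real \<phi>) + complex_of_real (1 - p n)) ^ n"

definition binR2 :: "(nat \<Rightarrow> real) \<Rightarrow> nat \<Rightarrow> real" where
  "binR2 p n = - (1/2) * binV p n"

definition binR4 :: "(nat \<Rightarrow> real) \<Rightarrow> nat \<Rightarrow> real" where
  "binR4 p n = (1/4) * binV p n * (1/6 - p n * (1 - p n))"

definition binR6 :: "(nat \<Rightarrow> real) \<Rightarrow> nat \<Rightarrow> real" where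
  "binR6 p n = - (1/6) * binV p n * (1/120 - (1/4) * p n * (1 - p n) + (p n)^2 * (1 - p n)^2)"

end

theory Submission
  imports Defs
begin

(* Since |p e^(i phi) + q|^2 = 1 - 2pq(1 - cos phi), the quantity R equals
   exp ((n/2) ln (1 - 2pq(1 - cos phi))).  Expanding 1 - cos phi to order phi^8 and
   ln (1 - x) to order x^4 gives (n/2) ln (...) = R2 phi^2 + R4 phi^4 + R6 phi^6 + O(n phi^8);
   after cancelling exp (R2 phi^2), a second-order expansion of exp yields the claim.
   Because pq stays bounded away from 0, the range phi <= M / V^(1/4) keeps n phi^4 bounded,
   which makes the Taylor remainder of exp uniformly bounded. *)

lemma abs_mult_le_mult: "\<bar>a\<bar> \<le> A \<Longrightarrow> \<bar>b\<bar> \<le> B \<Longrightarrow> \<bar>a * b\<bar> \<le> A * (B::real)"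
  by (simp add: abs_mult mult_mono')

lemma one_minus_cos_taylor_bound:
  "\<bar>1 - cos (x::real) - (x^2/2 - x^4/24 + x^6/720)\<bar> \<le> x^8 / 40320"
proof -
  obtain t where t: "cos x = (\<Sum>m<8. cos_coeff m * x^m) + cos (t + 1/2 * real 8 * pi) / fact 8 * x^8"
    using Maclaurin_cos_expansion[of x 8] by blast
  have "(\<Sum>m<8. cos_coeff m * x^m) = 1 - x^2/2 + x^4/24 - x^6/720"
    by (simp add: lessThan_nat_numeral cos_coeff_def fact_numeral)
  moreover have "\<bar>cos (t + 1/2 * real 8 * pi) / fact 8 * x^8\<bar> \<le> x^8 / 40320"
    using mult_right_mono[OF abs_cos_le_one[of "t + 1/2 * real 8 * pi"], of "x^8"]
    by (simp add: abs_mult fact_numeral)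
  ultimately show ?thesis using t by simp
qed

lemma ln_one_minus_taylor_bound:
  fixes x :: real
  assumes x: "\<bar>x\<bar> \<le> 1/2"
  shows "\<bar>ln (1 - x) + x + x^2/2 + x^3/3\<bar> \<le> 2 * \<bar>x\<bar>^4"
proof -
  define f where "f s = ln (1 - s) + s + s^2/2 + s^3/3" for s :: real
  define S :: "real set" where "S = cball 0 \<bar>x\<bar>"
  have "(f has_field_derivative - (s^3) / (1 - s)) (at s within S)" if "s \<in> S" for s
  proof -
    have "s < 1" using that x by (auto simp: S_def)
    then have "(f has_field_derivative -1/(1 - s) + 1 + s + s^2) (at s within S)"
      unfolding f_def by (auto intro!: derivative_eq_intros simp: power2_eq_square field_simps)
    moreover have "-1/(1 - s) + 1 + s + s^2 = - (s^3) / (1 - s)"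
      using \<open>s < 1\<close> by (simp add: field_simps power3_eq_cube power2_eq_square)
    ultimately show ?thesis by simp
  qed
  moreover have "norm (- (s^3) / (1 - s)) \<le> 2 * \<bar>x\<bar>^3" if "s \<in> S" for s
  proof -
    have s: "\<bar>s\<bar> \<le> \<bar>x\<bar>" "1/2 \<le> 1 - s" using that x by (auto simp: S_def)
    then have "norm (- (s^3) / (1 - s)) = \<bar>s\<bar>^3 / (1 - s)"
      by (simp add: abs_mult power_abs)
    also have "\<dots> \<le> \<bar>s\<bar>^3 / (1/2)"
      using s by (intro divide_left_mono) auto
    also have "\<dots> \<le> 2 * \<bar>x\<bar>^3" using s by (simp add: power_mono)
    finally show ?thesis .
  qed
  ultimately have "norm (f x - f 0) \<le> 2 * \<bar>x\<bar>^3 * norm (x - 0)"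
    by (intro field_differentiable_bound[of S]) (auto simp: S_def)
  moreover have "2 * \<bar>x\<bar>^3 * \<bar>x\<bar> = 2 * \<bar>x\<bar>^4" by (simp add: eval_nat_numeral)
  ultimately show ?thesis by (simp add: f_def)
qed

lemma exp_taylor2_bound:
  fixes y Y :: real
  assumes "\<bar>y\<bar> \<le> Y"
  shows "\<bar>exp y - (1 + y + y^2/2)\<bar> \<le> exp Y * \<bar>y\<bar>^3 / 6"
proof -
  obtain t where t: "\<bar>t\<bar> \<le> \<bar>y\<bar>" "exp y = (\<Sum>m<3. y^m / fact m) + exp t / fact 3 * y^3"
    using Maclaurin_exp_le[of y 3] by blast
  have "(\<Sum>m<3. y^m / fact m) = 1 + y + y^2/2"
    by (simp add: lessThan_nat_numeral fact_numeral)
  moreover have "\<bar>exp t / fact 3 * y^3\<bar> \<le> exp Y * \<bar>y\<bar>^3 / 6"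
    using t(1) assms by (simp add: abs_mult power_abs fact_numeral mult_right_mono)
  ultimately show ?thesis using t(2) by simp
qed

lemma cmod_binomial_char_sq:
  "cmod (of_real p * exp (\<i> * of_real \<phi>) + of_real (1 - p))^2 = 1 - 2 * (p * (1 - p)) * (1 - cos \<phi>)"
proof -
  have "cmod (of_real p * exp (\<i> * of_real \<phi>) + of_real (1 - p))^2
      = (p * cos \<phi> + (1 - p))^2 + (p * sin \<phi>)^2"
    by (simp add: cmod_power2 Re_exp Im_exp)
  also have "\<dots> = 1 - 2 * (p * (1 - p)) * (1 - cos \<phi>)"
    unfolding power_mult_distrib sin_squared_eq by (simp add: algebra_simps power2_eq_square)
  finally show ?thesis .
qed

lemma binR_eq_exp_ln:
  assumes "0 < 1 - 2 * (p n * (1 - p n)) * (1 - cos \<phi>)"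
  shows "binR p n \<phi> = exp (real n / 2 * ln (1 - 2 * (p n * (1 - p n)) * (1 - cos \<phi>)))"
proof -
  define r where "r = cmod (of_real (p n) * exp (\<i> * of_real \<phi>) + of_real (1 - p n))"
  have r2: "r^2 = 1 - 2 * (p n * (1 - p n)) * (1 - cos \<phi>)"
    unfolding r_def by (rule cmod_binomial_char_sq)
  then have "0 < r^2" using assms by simp
  then have "0 < r" unfolding r_def by (metis norm_ge_zero less_le zero_less_power2)
  have "binR p n \<phi> = exp (real n * ln r)"
    using \<open>0 < r\<close> by (simp add: binR_def r_def exp_of_nat_mult)
  also have "ln r = ln (r^2) / 2" using \<open>0 < r\<close> by (simp add: ln_realpow)
  finally show ?thesis by (simp add: r2)
qed

lemma two_t_c_expansion_bounds:
  fixes t h c :: real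
  assumes t: "0 \<le> t" "t \<le> 1/4" and h: "0 < h" "h \<le> 1/4"
    and c: "\<bar>c - (h/2 - h^2/24 + h^3/720)\<bar> \<le> h^4/40320"
  defines "x \<equiv> 2*t*c"
  shows "\<bar>x - (t*h - t*h^2/12 + t*h^3/360)\<bar> \<le> h^4"
    and "\<bar>x^2 - (t*h - t*h^2/12)^2\<bar> \<le> h^4"
    and "\<bar>x^3 - (t*h)^3\<bar> \<le> 3*h^4"
    and "\<bar>x\<bar> \<le> h/2"
proof -
  define P where "P = t*h - t*h^2/12 + t*h^3/360"
  define Q where "Q = t*h - t*h^2/12"
  have hp: "h^2 \<le> h/4" "h^3 \<le> h^2/4" "h^4 \<le> h^3/4" "0 < h^2" "0 < h^3" "0 < h^4"
    using h by (simp_all add: eval_nat_numeral mult_le_cancel_left1)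
  have th: "0 \<le> t*h" "t*h \<le> h/4" "0 \<le> t*h^2" "t*h^2 \<le> h^2/4" "0 \<le> t*h^3" "t*h^3 \<le> h^3/4"
    using t h by (auto intro: mult_right_mono)
  have xP: "\<bar>x - P\<bar> \<le> h^4"
  proof -
    have "x - P = 2*t * (c - (h/2 - h^2/24 + h^3/720))" by (simp add: x_def P_def algebra_simps)
    also have "\<bar>\<dots>\<bar> \<le> (1/2) * (h^4/40320)" using c t by (intro abs_mult_le_mult) auto
    finally show ?thesis using hp by linarith
  qed
  then show "\<bar>x - (t*h - t*h^2/12 + t*h^3/360)\<bar> \<le> h^4" by (simp add: P_def)
  have xQ: "\<bar>x - Q\<bar> \<le> h^3" using xP th hp unfolding P_def Q_def by (simp only: abs_le_iff) linarith
  have xth: "\<bar>x - t*h\<bar> \<le> h^2" using xQ th hp unfolding Q_def by (simp only: abs_le_iff) linarith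
  have x: "\<bar>x\<bar> \<le> h/2" using xth th hp by (simp only: abs_le_iff) linarith
  then show "\<bar>x\<bar> \<le> h/2" .
  have Q: "\<bar>Q\<bar> \<le> h/2" using th hp unfolding Q_def by (simp only: abs_le_iff) linarith
  have "x^2 - Q^2 = (x - Q) * (x + Q)" by (simp add: algebra_simps power2_eq_square)
  also have "\<bar>\<dots>\<bar> \<le> h^3 * h" using xQ x Q by (intro abs_mult_le_mult) auto
  also have "\<dots> = h^4" by (simp add: eval_nat_numeral)
  finally show "\<bar>x^2 - (t*h - t*h^2/12)^2\<bar> \<le> h^4" by (simp add: Q_def)
  have "\<bar>x*x\<bar> \<le> (h/2)*(h/2)" "\<bar>x*(t*h)\<bar> \<le> (h/2)*(h/2)" "\<bar>(t*h)*(t*h)\<bar> \<le> (h/2)*(h/2)"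
    using x th by (intro abs_mult_le_mult; simp)+
  then have "\<bar>x*x + x*(t*h) + (t*h)*(t*h)\<bar> \<le> 3*h^2"
    by (simp only: power2_eq_square abs_le_iff) linarith
  moreover have "x^3 - (t*h)^3 = (x - t*h) * (x*x + x*(t*h) + (t*h)*(t*h))"
    by (simp add: algebra_simps power3_eq_cube)
  ultimately have "\<bar>x^3 - (t*h)^3\<bar> \<le> h^2 * (3*h^2)" using xth by (simp only:) (rule abs_mult_le_mult)
  then show "\<bar>x^3 - (t*h)^3\<bar> \<le> 3*h^4" by (simp add: eval_nat_numeral)
qed

lemma ln_one_minus_two_t_c_expansion:
  fixes t h c :: real
  assumes t: "0 \<le> t" "t \<le> 1/4" and h: "0 < h" "h \<le> 1/4"
    and c: "\<bar>c - (h/2 - h^2/24 + h^3/720)\<bar> \<le> h^4/40320"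
  shows "\<bar>ln (1 - 2*t*c) - (- t*h + (t/12 - t^2/2)*h^2 + (- t/360 + t^2/12 - t^3/3)*h^3)\<bar> \<le> 6*h^4"
proof -
  define x where "x = 2*t*c"
  note bounds = two_t_c_expansion_bounds[OF t h c, folded x_def]
  have ln_x: "\<bar>ln (1 - x) + x + x^2/2 + x^3/3\<bar> \<le> 2*h^4"
  proof -
    have "\<bar>x\<bar>^4 \<le> (h/2)^4" using bounds(4) by (intro power_mono) auto
    also have "\<dots> \<le> h^4" using h by (intro power_mono) auto
    finally have "\<bar>x\<bar>^4 \<le> h^4" .
    moreover have "\<bar>x\<bar> \<le> 1/2" using bounds(4) h by linarith
    ultimately show ?thesis using ln_one_minus_taylor_bound by force
  qed
  have t2: "0 \<le> t^2*h^4" "t^2*h^4 \<le> h^4"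
    using t h by (auto intro!: mult_left_le_one_le simp: power_le_one)
  \<comment> \<open>The claimed polynomial is -x - x^2/2 - x^3/3 with x replaced by the expansions of
    two_t_c_expansion_bounds, truncated after h^3.\<close>
  have "ln (1 - x) - (- t*h + (t/12 - t^2/2)*h^2 + (- t/360 + t^2/12 - t^3/3)*h^3)
      = (ln (1 - x) + x + x^2/2 + x^3/3) - (x - (t*h - t*h^2/12 + t*h^3/360))
        - (x^2 - (t*h - t*h^2/12)^2)/2 - (x^3 - (t*h)^3)/3 - t^2*h^4/288"
    by (simp add: field_simps power2_eq_square power3_eq_cube power4_eq_xxxx)
  moreover have "\<bar>a - b - c/2 - d/3 - e/288\<bar> \<le> 6*H"
    if "\<bar>a\<bar> \<le> 2*H" "\<bar>b\<bar> \<le> H" "\<bar>c\<bar> \<le> H" "\<bar>d\<bar> \<le> 3*H" "0 \<le> e" "e \<le> H" for a b c d e H :: real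
    using that by (simp only: abs_le_iff) linarith
  ultimately show ?thesis using ln_x bounds(1-3) t2 unfolding x_def[symmetric] by metis
qed

lemma abs_add_half_add_le:
  "\<bar>u\<bar> \<le> A \<Longrightarrow> \<bar>v\<bar> \<le> B \<Longrightarrow> \<bar>w\<bar> \<le> C \<Longrightarrow> \<bar>u + v/2 + w\<bar> \<le> A + B/2 + (C::real)"
  by linarith

lemma exp_second_order_expansion_bound:
  fixes n h K a b E :: real
  assumes n: "0 \<le> n" and h: "0 < h" "h \<le> 1/4" and K: "n*h^2 \<le> K"
    and a: "\<bar>a\<bar> \<le> n" and b: "\<bar>b\<bar> \<le> n" and E: "\<bar>E\<bar> \<le> 3*(n*h^4)"
  shows "\<bar>exp (a*h^2 + b*h^3 + E) - (1 + a*h^2 + b*h^3 + (1/2)*a^2*h^4)\<bar>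
           \<le> (3 + 2*exp (2*K)) * (n*h^4 + n^2*h^5 + n^3*h^6)"
proof -
  define w where "w = b*h^3 + E"
  define y where "y = a*h^2 + w"
  have hp: "h^3 \<le> h^2/4" "h^4 \<le> h^3/4" "0 < h^2" "0 < h^3"
    using h by (simp_all add: eval_nat_numeral mult_le_cancel_left1)
  have nh: "n*h^3 \<le> n*h^2/4" "n*h^4 \<le> n*h^3/4"
    using mult_left_mono[OF hp(1) n] mult_left_mono[OF hp(2) n] by simp_all
  have ah: "\<bar>a*h^2\<bar> \<le> n*h^2" using a hp by (intro abs_mult_le_mult) auto
  have bh: "\<bar>b*h^3\<bar> \<le> n*h^3" using b hp by (intro abs_mult_le_mult) auto
  have w: "\<bar>w\<bar> \<le> 2*n*h^3" unfolding w_def using bh E nh by (simp only: abs_le_iff) linarith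
  have y: "\<bar>y\<bar> \<le> 2*(n*h^2)" unfolding y_def using ah w nh by (simp only: abs_le_iff) linarith
  have y_sq: "\<bar>y^2 - (a*h^2)^2\<bar> \<le> 6*(n^2*h^5)"
  proof -
    have "y^2 - (a*h^2)^2 = w * (2*(a*h^2) + w)" by (simp add: y_def algebra_simps power2_eq_square)
    moreover have "\<bar>2*(a*h^2) + w\<bar> \<le> 3*(n*h^2)" using ah w nh by (simp only: abs_le_iff) linarith
    ultimately have "\<bar>y^2 - (a*h^2)^2\<bar> \<le> (2*n*h^3) * (3*(n*h^2))"
      using w by (simp only:) (rule abs_mult_le_mult)
    then show ?thesis by (simp add: eval_nat_numeral algebra_simps)
  qed
  have exp_y: "\<bar>exp y - (1 + y + y^2/2)\<bar> \<le> (4/3) * exp (2*K) * (n^3*h^6)"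
  proof -
    have "\<bar>y\<bar>^3 \<le> (2*(n*h^2))^3" using y by (intro power_mono) auto
    then have y3: "\<bar>y\<bar>^3 \<le> 8*(n^3*h^6)" by (simp add: power_mult_distrib power_mult[symmetric])
    have "\<bar>exp y - (1 + y + y^2/2)\<bar> \<le> exp (2*K) * \<bar>y\<bar>^3 / 6"
      using y K by (intro exp_taylor2_bound) linarith
    also have "\<dots> \<le> exp (2*K) * (8*(n^3*h^6)) / 6"
      using y3 by (intro divide_right_mono mult_left_mono) auto
    finally show ?thesis by (simp add: mult_ac)
  qed
  have "exp (a*h^2 + b*h^3 + E) - (1 + a*h^2 + b*h^3 + (1/2)*a^2*h^4)
      = E + (y^2 - (a*h^2)^2)/2 + (exp y - (1 + y + y^2/2))"
    by (simp add: y_def w_def field_simps power_mult_distrib)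
  also have "\<bar>\<dots>\<bar> \<le> 3*(n*h^4) + 6*(n^2*h^5)/2 + (4/3) * exp (2*K) * (n^3*h^6)"
    by (rule abs_add_half_add_le[OF E y_sq exp_y])
  also have "\<dots> \<le> (3 + 2*exp (2*K)) * (n*h^4 + n^2*h^5 + n^3*h^6)"
    using n h by (simp add: algebra_simps)
  finally show ?thesis .
qed

lemma mult_one_minus_self_bounds:
  fixes q :: real
  assumes "0 \<le> q" "q \<le> 1"
  shows "0 \<le> q * (1 - q)" and "q * (1 - q) \<le> 1/4"
proof -
  show "0 \<le> q * (1 - q)" using assms by simp
  have "q * (1 - q) = 1/4 - (q - 1/2)^2" by (simp add: power2_eq_square algebra_simps)
  then show "q * (1 - q) \<le> 1/4" by simp
qed

lemma abs_expansion_coeffs_le: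
  fixes t :: real
  assumes t: "0 \<le> t" "t \<le> 1/4"
  shows "\<bar>t * (1/6 - t)\<bar> \<le> 1/4" and "\<bar>t * (1/120 - (1/4) * t + t^2)\<bar> \<le> 1/4"
proof -
  have "t^2 \<le> 1/16" using t power_mono[of t "1/4" 2] by (simp add: power_divide)
  then have "\<bar>1/6 - t\<bar> \<le> 1" "\<bar>1/120 - (1/4) * t + t^2\<bar> \<le> 1"
    using t zero_le_power2[of t] by (simp_all only: abs_le_iff) linarith+
  then show "\<bar>t * (1/6 - t)\<bar> \<le> 1/4" "\<bar>t * (1/120 - (1/4) * t + t^2)\<bar> \<le> 1/4"
    using abs_mult_le_mult[of t "1/4" _ 1] t by simp_all
qed

lemma binR_expansion_bound:
  fixes p :: "nat \<Rightarrow> real"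
  assumes p: "0 \<le> p n" "p n \<le> 1" and \<phi>: "0 < \<phi>" "\<phi>^2 \<le> 1/4" and K: "real n * \<phi>^4 \<le> K"
  shows "\<bar>exp (- binR2 p n * \<phi>^2) * binR p n \<phi>
           - (1 + binR4 p n * \<phi>^4 + binR6 p n * \<phi>^6 + (1/2) * (binR4 p n)^2 * \<phi>^8)\<bar>
         \<le> (3 + 2*exp (2*K)) * (\<Sum>k\<in>{1..3::nat}. real n ^ k * \<phi> ^ (2*k+6))"
proof -
  define t where "t = p n * (1 - p n)"
  define h where "h = \<phi>^2"
  define c where "c = 1 - cos \<phi>"
  define a where "a = real n * (t * (1/6 - t) / 4)"
  define b where "b = real n * - (t * (1/120 - (1/4) * t + t^2) / 6)"
  define E where "E = real n / 2 * (ln (1 - 2*t*c) - (- t*h + (t/12 - t^2/2)*h^2 + (- t/360 + t^2/12 - t^3/3)*h^3))"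
  have t: "0 \<le> t" "t \<le> 1/4" using mult_one_minus_self_bounds[OF p] by (simp_all add: t_def)
  have h: "0 < h" "h \<le> 1/4" using \<phi> by (auto simp: h_def)
  have c: "\<bar>c - (h/2 - h^2/24 + h^3/720)\<bar> \<le> h^4/40320"
    using one_minus_cos_taylor_bound[of \<phi>] by (simp add: c_def h_def power_mult[symmetric])
  have "h^3 \<le> 1" "h^4 \<le> 1" using h by (simp_all add: power_le_one)
  then have "c \<le> 1/2" using c h zero_le_power2[of h] by (simp only: abs_le_iff) linarith
  then have "0 < 1 - 2*t*c" using t mult_mono[of "2*t" "1/2" c "1/2"] by (simp add: c_def)
  then have "exp (- binR2 p n * \<phi>^2) * binR p n \<phi> = exp (real n * t / 2 * h + real n / 2 * ln (1 - 2*t*c))"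
    by (simp add: binR_eq_exp_ln binR2_def binV_def t_def c_def h_def exp_add mult_ac)
  also have "\<dots> = exp (a*h^2 + b*h^3 + E)"
    by (simp add: a_def b_def E_def field_simps power2_eq_square power3_eq_cube)
  finally have R: "exp (- binR2 p n * \<phi>^2) * binR p n \<phi> = exp (a*h^2 + b*h^3 + E)" .
  have "\<bar>E\<bar> \<le> real n / 2 * (6*h^4)"
    unfolding E_def using ln_one_minus_two_t_c_expansion[OF t h c] by (intro abs_mult_le_mult) auto
  then have E: "\<bar>E\<bar> \<le> 3*(real n*h^4)" by simp
  have "\<bar>a\<bar> \<le> real n * 1" "\<bar>b\<bar> \<le> real n * 1"
    using abs_expansion_coeffs_le[OF t]
    unfolding a_def b_def by (intro abs_mult_le_mult; simp)+
  then have ab: "\<bar>a\<bar> \<le> real n" "\<bar>b\<bar> \<le> real n" by simp_all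
  have "{1..3::nat} = {1, 2, 3}" by auto
  then have sum: "(\<Sum>k\<in>{1..3::nat}. real n ^ k * \<phi> ^ (2*k+6)) = real n*h^4 + (real n)^2*h^5 + (real n)^3*h^6"
    by (simp add: h_def power_mult[symmetric])
  have a4: "binR4 p n * \<phi>^4 = a*h^2" and b6: "binR6 p n * \<phi>^6 = b*h^3"
    by (simp_all add: binR4_def binR6_def binV_def a_def b_def t_def h_def power_mult[symmetric] power_mult_distrib)
  have a8: "(binR4 p n)^2 * \<phi>^8 = a^2*h^4"
    using arg_cong[OF a4, of "\<lambda>x. x^2"] by (simp add: power_mult_distrib h_def power_mult[symmetric])
  have "real n * h^2 \<le> K" using K by (simp add: h_def power_mult[symmetric])
  from exp_second_order_expansion_bound[OF of_nat_0_le_iff h this ab E]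
  show ?thesis unfolding R sum a4 b6 by (simp add: a8)
qed

lemma angle_bounds_of_variance_ge:
  fixes p :: "nat \<Rightarrow> real" and c M \<phi> :: real
  assumes c: "0 < c" "c \<le> p n * (1 - p n)" and M: "0 < M" and n: "16 * M^4 / c \<le> real n"
    and \<phi>: "0 < \<phi>" "\<phi> \<le> M / binV p n powr (1/4)"
  shows "real n * \<phi>^4 \<le> M^4 / c" and "\<phi>^2 \<le> 1/4"
proof -
  have "0 < 16 * M^4 / c" using c M by simp
  then have "0 < real n" using n by linarith
  then have V: "0 < binV p n" "binV p n \<ge> real n * c"
    using c by (auto simp: binV_def mult.assoc intro: mult_left_mono)
  have "\<phi>^4 \<le> (M / binV p n powr (1/4))^4" using \<phi> by (intro power_mono) auto
  also have "\<dots> = M^4 / binV p n"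
    using V by (simp add: power_divide powr_power)
  also have "\<dots> \<le> M^4 / (real n * c)"
    using V c \<open>0 < real n\<close> by (intro divide_left_mono) auto
  finally have \<phi>4: "\<phi>^4 \<le> M^4 / (real n * c)" .
  then have "real n * \<phi>^4 \<le> real n * (M^4 / (real n * c))"
    using \<open>0 < real n\<close> by (intro mult_left_mono) auto
  then show "real n * \<phi>^4 \<le> M^4 / c" using \<open>0 < real n\<close> by simp
  note \<phi>4
  also have "M^4 / (real n * c) \<le> M^4 / (16 * M^4 / c * c)"
    using n c M \<open>0 < real n\<close> by (intro divide_left_mono mult_right_mono) auto
  also have "\<dots> = (1/4)^2" using c M by (simp add: power_divide)
  finally have "(\<phi>^2)^2 \<le> (1/4)^2" by (simp add: power_mult[symmetric] power_divide)
  then show "\<phi>^2 \<le> 1/4" by (rule power2_le_imp_le) simp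
qed

lemma eventually_variance_factor_ge:
  fixes p :: "nat \<Rightarrow> real"
  assumes "0 < Liminf sequentially (\<lambda>n. ereal (p n))"
    and "Limsup sequentially (\<lambda>n. ereal (p n)) < 1"
  obtains c where "0 < c" "eventually (\<lambda>n. 0 \<le> p n \<and> p n \<le> 1 \<and> c \<le> p n * (1 - p n)) sequentially"
proof -
  obtain a where a: "0 < a" "ereal a < Liminf sequentially (\<lambda>n. ereal (p n))"
    using ereal_dense2[OF assms(1)] by (metis ereal_less(2) zero_ereal_def)
  obtain b where b: "Limsup sequentially (\<lambda>n. ereal (p n)) < ereal b" "b < 1"
    using ereal_dense2[OF assms(2)] by (metis ereal_less(3) one_ereal_def)
  have "eventually (\<lambda>n. a < p n \<and> p n < b) sequentially"
    using less_LiminfD[OF a(2)] Limsup_lessD[OF b(1)] by (auto elim: eventually_elim2)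
  then have "eventually (\<lambda>n. 0 \<le> p n \<and> p n \<le> 1 \<and> a * (1 - b) \<le> p n * (1 - p n)) sequentially"
    by eventually_elim (use a b in \<open>auto intro: mult_mono\<close>)
  moreover have "0 < a * (1 - b)" using a b by simp
  ultimately show ?thesis using that by blast
qed

theorem lemma3p2:
  fixes p :: "nat \<Rightarrow> real" and M :: real
  assumes "0 < Liminf sequentially (\<lambda>n. ereal (p n))"
    and "Limsup sequentially (\<lambda>n. ereal (p n)) < 1"
    and "M > 0"
  shows "\<exists>C>0. \<exists>N. \<forall>n\<ge>N. \<forall>\<phi>::real. 0 < \<phi> \<and> \<phi> \<le> M / binV p n powr (1/4) \<longrightarrow>
           \<bar>exp (- binR2 p n * \<phi>^2) * binR p n \<phi>
             - (1 + binR4 p n * \<phi>^4 + binR6 p n * \<phi>^6 + (1/2) * (binR4 p n)^2 * \<phi>^8)\<bar>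
           \<le> C * (\<Sum>k\<in>{1..3::nat}. real n ^ k * \<phi> ^ (2*k+6))"
proof -
  obtain c where c: "0 < c"
    and ev: "eventually (\<lambda>n. 0 \<le> p n \<and> p n \<le> 1 \<and> c \<le> p n * (1 - p n)) sequentially"
    using eventually_variance_factor_ge[OF assms(1,2)] by blast
  have "eventually (\<lambda>n. 16 * M^4 / c \<le> real n) sequentially"
    using filterlim_real_sequentially by (simp add: filterlim_at_top)
  with ev have "eventually (\<lambda>n. 0 \<le> p n \<and> p n \<le> 1 \<and> c \<le> p n * (1 - p n) \<and> 16 * M^4 / c \<le> real n)
      sequentially"
    by eventually_elim simp
  then obtain N where N: "\<And>n. n \<ge> N \<Longrightarrow>
      0 \<le> p n \<and> p n \<le> 1 \<and> c \<le> p n * (1 - p n) \<and> 16 * M^4 / c \<le> real n"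
    unfolding eventually_sequentially by blast
  show ?thesis
  proof (intro exI[of _ "3 + 2 * exp (2 * (M^4 / c))"] exI[of _ N] conjI allI impI)
    fix n \<phi> assume "N \<le> n" and \<phi>: "0 < \<phi> \<and> \<phi> \<le> M / binV p n powr (1/4)"
    with N have p: "0 \<le> p n" "p n \<le> 1" and "c \<le> p n * (1 - p n)" "16 * M^4 / c \<le> real n"
      by auto
    with \<phi> have "real n * \<phi>^4 \<le> M^4 / c" "\<phi>^2 \<le> 1/4"
      using angle_bounds_of_variance_ge[OF c _ assms(3)] by auto
    with p \<phi> show "\<bar>exp (- binR2 p n * \<phi>^2) * binR p n \<phi>
             - (1 + binR4 p n * \<phi>^4 + binR6 p n * \<phi>^6 + (1/2) * (binR4 p n)^2 * \<phi>^8)\<bar>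
           \<le> (3 + 2 * exp (2 * (M^4 / c))) * (\<Sum>k\<in>{1..3::nat}. real n ^ k * \<phi> ^ (2*k+6))"
      by (intro binR_expansion_bound) auto
  qed (simp add: add_pos_nonneg)
qed

end
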